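(* Consider the one-state softmax setting in the context, with the update $\theta_{t+1} = \theta_t + \eta_t(\hat r_t - \hat b_t)$ and on-policy sampling $a_t\sim\pi_{\theta_t}(\cdot)$. (1) If $\hat r_t(a) = \frac{\mathbb{I}\{a_t = a\}}{\pi_{\theta_t}(a)} r(a)$ (true mean reward observed) and $\eta_t = \eta > 0$ is constant, then for all $t\ge1$: $\pi_{\theta_{t+1}}^\top r - \pi_{\theta_t}^\top r \ge 0$ almost surely, and $$\mathbb{E}_t[\pi_{\theta_{t+1}}^\top r] - \pi_{\theta_t}^\top r \ge \frac{\eta}{1+\eta}\,\pi_{\theta_t}(a^* )\left(r(a^* ) - \pi_{\theta_t}^\top r\right)^2,$$ where $\mathbb{E}_t$ is over the sampling of $a_t\sim\pi_{\theta_t}(\cdot)$. (2) If $\hat r_t(a) = \frac{\mathbb{I}\{a_t = a\}}{\pi_{\theta_t}(a)} x_t(a)$ (sampled reward observed) and $\eta_t = \frac{\pi_{\theta_t}(a_t)\,|r(a_t) - \pi_{\theta_t}^\top r|}{8R_{\max}^2}$, then for all $t\ge 1$, $$\mathbb{E}_t[\pi_{\theta_{t+1}}^\top r] - \pi_{\theta_t}^\top r \ge \frac{1}{16 R_{\max}^2}\sum_{i=1}^K \pi_{\theta_t}(i)^2\left|r(i) - \pi_{\theta_t}^\top r\right|^3 \ge \frac{1}{16R_{\max}^2}\cdot\frac{\Delta}{K-1}\cdot\pi_{\theta_t}(a^* )^2\left(r(a^* ) - \pi_{\theta_t}^\top r\right)^2,$$ where $\mathbb{E}_t$ is over the sampling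 of $a_t\sim\pi_{\theta_t}(\cdot)$ and of the reward $x_t(a_t)\sim R_{a_t}$ given $\theta_t$.
   Context: Let $K\ge 2$, $r\in[0,1]^K$, $a^*\in\arg\max_a r(a)$, $\Delta := r(a^* ) - \max_{a\ne a^*} r(a)$. Softmax policy $\pi_\theta(a) = e^{\theta(a)}/\sum_{a'}e^{\theta(a')}$. For each action $a$, $R_a$ is a reward distribution supported on $[-R_{\max},R_{\max}]$ ($R_{\max}>0$) with mean $r(a)$. At iteration $t$, $a_t\sim\pi_{\theta_t}(\cdot)$ is sampled; in the sampled-reward case a reward $x_t(a_t)\sim R_{a_t}$ is observed and $x_t(a) := 0$ for $a\ne a_t$. The baseline vector is $\hat b_t(a) = \left(\frac{\mathbb{I}\{a_t=a\}}{\pi_{\theta_t}(a)} - 1\right)\pi_{\theta_t}^\top r$. *)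

theory Defs
  imports "HOL-Probability.Probability"
begin

text \<open>Actions are the elements of a finite type 'a (K = CARD('a)).\<close>

definition softmax :: "('a::finite \<Rightarrow> real) \<Rightarrow> 'a \<Rightarrow> real" where
  "softmax \<theta> a = exp (\<theta> a) / (\<Sum>a'\<in>UNIV. exp (\<theta> a'))"

definition exp_reward :: "('a::finite \<Rightarrow> real) \<Rightarrow> ('a \<Rightarrow> real) \<Rightarrow> real" where
  "exp_reward \<theta> r = (\<Sum>a\<in>UNIV. softmax \<theta> a * r a)"

definition baseline :: "('a::finite \<Rightarrow> real) \<Rightarrow> ('a \<Rightarrow> real) \<Rightarrow> 'a \<Rightarrow> 'a \<Rightarrow> real" where
  "baseline \<theta> r act a = ((if act = a then 1 else 0) / softmax \<theta> a - 1) * exp_reward \<theta> r"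

definition is_reward :: "('a::finite \<Rightarrow> real) \<Rightarrow> 'a \<Rightarrow> ('a \<Rightarrow> real) \<Rightarrow> 'a \<Rightarrow> real" where
  "is_reward \<theta> act x a = (if act = a then 1 else 0) / softmax \<theta> a * x a"

definition pg_update :: "('a \<Rightarrow> real) \<Rightarrow> real \<Rightarrow> ('a \<Rightarrow> real) \<Rightarrow> ('a \<Rightarrow> real) \<Rightarrow> 'a \<Rightarrow> real" where
  "pg_update \<theta> \<eta> rhat bhat a = \<theta> a + \<eta> * (rhat a - bhat a)"

definition sampled_vec :: "'a \<Rightarrow> real \<Rightarrow> 'a \<Rightarrow> real" where
  "sampled_vec act x a = (if a = act then x else 0)"

end

theory Submission
  imports Defs
begin

(*
  Raising the logit of an action i with probability p = pi(i) by \<alpha> changes the expected reward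
  J = pi^T r by p (r(i) - J) (exp \<alpha> - 1) / (1 + p (exp \<alpha> - 1)). Up to a shift of all logits,
  which leaves the softmax unchanged, the update with the baseline is exactly such a bump of the
  sampled action, with \<alpha> = \<eta> (x - J) / p. For the true reward x = r(i), \<alpha> has the sign of
  r(i) - J, so every step is an improvement, and the step on astar alone already gives the bound of
  part (1) since exp \<alpha> - 1 \<ge> \<alpha>. For a sampled reward the adaptive step size keeps |\<alpha>| \<le> 1/4,
  where (exp \<alpha> - 1) / (1 + p (exp \<alpha> - 1)) = \<alpha> + O(\<alpha>^2): the linear term averages to
  p |r(i) - J|^3 / (8 Rmax^2) over the reward and the error is at most half of that. The last
  inequality combines Cauchy-Schwarz, applied to the centering identity sum_i pi(i) (r(i) - J) = 0,
  with |r(i) - J| \<ge> \<Delta> - (r(astar) - J) for i \<noteq> astar.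
*)

lemma softmax_pos: "0 < softmax \<theta> a"
  unfolding softmax_def by (intro divide_pos_pos exp_gt_zero sum_pos) auto

lemma sum_softmax: "(\<Sum>a\<in>UNIV. softmax \<theta> a) = 1"
proof -
  have "(\<Sum>a\<in>UNIV. exp (\<theta> a)) > 0" by (intro sum_pos) auto
  then show ?thesis unfolding softmax_def by (simp add: sum_divide_distrib[symmetric])
qed

lemma softmax_le_one: "softmax \<theta> a \<le> 1"
proof -
  have "softmax \<theta> a \<le> (\<Sum>a\<in>UNIV. softmax \<theta> a)"
    by (rule member_le_sum) (auto intro: less_imp_le softmax_pos)
  then show ?thesis by (simp add: sum_softmax)
qed

lemma sum_softmax_diff:
  "(\<Sum>a\<in>UNIV. softmax \<theta> a * f a) - c = (\<Sum>a\<in>UNIV. softmax \<theta> a * (f a - c))"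
  by (simp add: right_diff_distrib sum_subtractf sum_distrib_right[symmetric] sum_softmax)

lemma exp_reward_le:
  assumes "\<And>a. r a \<le> m"
  shows "exp_reward \<theta> r \<le> m"
proof -
  have "exp_reward \<theta> r - m \<le> 0"
    unfolding exp_reward_def sum_softmax_diff using assms
    by (intro sum_nonpos mult_nonneg_nonpos) (auto intro: less_imp_le softmax_pos)
  then show ?thesis by simp
qed

lemma exp_reward_ge:
  assumes "\<And>a. m \<le> r a"
  shows "m \<le> exp_reward \<theta> r"
proof -
  have "0 \<le> exp_reward \<theta> r - m"
    unfolding exp_reward_def sum_softmax_diff using assms
    by (intro sum_nonneg mult_nonneg_nonneg) (auto intro: less_imp_le softmax_pos)
  then show ?thesis by simp
qed

lemma softmax_add_const: "softmax (\<lambda>a. \<theta> a + c) = softmax \<theta>"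
  by (simp add: fun_eq_iff softmax_def exp_add sum_distrib_right[symmetric])

lemma softmax_bump:
  fixes \<theta> :: "'a::finite \<Rightarrow> real" and \<alpha> :: real and i :: 'a
  defines "q \<equiv> softmax \<theta> i * (exp \<alpha> - 1)"
  shows "softmax (\<lambda>a. \<theta> a + (if a = i then \<alpha> else 0)) a
    = (softmax \<theta> a + (if a = i then q else 0)) / (1 + q)"
proof -
  define S where "S = (\<Sum>a\<in>UNIV. exp (\<theta> a))"
  have "S > 0" unfolding S_def by (intro sum_pos) auto
  have bumped: "exp (\<theta> a + (if a = i then \<alpha> else 0))
      = exp (\<theta> a) + (if a = i then exp (\<theta> i) * (exp \<alpha> - 1) else 0)" for a
    by (simp add: exp_add algebra_simps)
  have "(\<Sum>a\<in>UNIV. exp (\<theta> a + (if a = i then \<alpha> else 0))) = S * (1 + q)"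
    using \<open>S > 0\<close> by (simp add: bumped sum.distrib S_def q_def softmax_def field_simps)
  then show ?thesis
    using \<open>S > 0\<close> by (simp add: softmax_def bumped q_def S_def add_divide_distrib)
qed

definition bump_gain :: "real \<Rightarrow> real \<Rightarrow> real" where
  "bump_gain p \<alpha> = (exp \<alpha> - 1) / (1 + p * (exp \<alpha> - 1))"

lemma bump_gain_denom_pos:
  fixes p \<alpha> :: real
  assumes "0 < p" "p \<le> 1"
  shows "0 < 1 + p * (exp \<alpha> - 1)"
proof -
  have "0 < (1 - p) + p * exp \<alpha>" using assms by (intro add_nonneg_pos) auto
  then show ?thesis by (simp add: algebra_simps)
qed

lemma exp_reward_bump:
  fixes \<theta> r :: "'a::finite \<Rightarrow> real"
  shows "exp_reward (\<lambda>a. \<theta> a + (if a = i then \<alpha> else 0)) r - exp_reward \<theta> r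
    = softmax \<theta> i * bump_gain (softmax \<theta> i) \<alpha> * (r i - exp_reward \<theta> r)"
proof -
  define p where "p = softmax \<theta> i"
  define q where "q = p * (exp \<alpha> - 1)"
  have "0 < 1 + q" unfolding q_def p_def by (intro bump_gain_denom_pos softmax_pos softmax_le_one)
  have "exp_reward (\<lambda>a. \<theta> a + (if a = i then \<alpha> else 0)) r
      = (\<Sum>a\<in>UNIV. (softmax \<theta> a * r a + (if a = i then q * r i else 0)) / (1 + q))"
    unfolding exp_reward_def softmax_bump p_def q_def by (intro sum.cong) (auto simp: algebra_simps)
  also have "\<dots> = (exp_reward \<theta> r + q * r i) / (1 + q)"
    by (simp add: sum_divide_distrib[symmetric] sum.distrib exp_reward_def)
  finally show ?thesis
    using \<open>0 < 1 + q\<close> by (simp add: bump_gain_def q_def p_def field_simps)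
qed

lemma pg_update_eq_bump:
  "pg_update \<theta> \<eta> (is_reward \<theta> i x) (baseline \<theta> r i)
    = (\<lambda>a. (\<theta> a + (if a = i then \<eta> * (x i - exp_reward \<theta> r) / softmax \<theta> i else 0))
            + \<eta> * exp_reward \<theta> r)"
  unfolding pg_update_def is_reward_def baseline_def
  by (auto simp: fun_eq_iff field_simps diff_divide_distrib)

lemma exp_reward_pg_update:
  fixes \<theta> r x :: "'a::finite \<Rightarrow> real"
  shows "exp_reward (pg_update \<theta> \<eta> (is_reward \<theta> i x) (baseline \<theta> r i)) r - exp_reward \<theta> r
    = softmax \<theta> i * bump_gain (softmax \<theta> i) (\<eta> * (x i - exp_reward \<theta> r) / softmax \<theta> i)
        * (r i - exp_reward \<theta> r)"
  unfolding pg_update_eq_bump exp_reward_def softmax_add_const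
  by (fold exp_reward_def) (rule exp_reward_bump)

lemma bump_gain_mult_self_nonneg:
  fixes p \<alpha> :: real
  assumes "0 < p" "p \<le> 1"
  shows "0 \<le> \<alpha> * bump_gain p \<alpha>"
proof -
  have "0 \<le> \<alpha> * (exp \<alpha> - 1)"
    by (cases "0 \<le> \<alpha>") (auto intro: mult_nonpos_nonpos)
  then show ?thesis
    using bump_gain_denom_pos[OF assms, of \<alpha>] by (simp add: bump_gain_def)
qed

lemma bump_gain_ge:
  fixes p \<alpha> :: real
  assumes "0 < p" "p \<le> 1" "0 \<le> \<alpha>"
  shows "p * \<alpha> / (1 + p * \<alpha>) \<le> p * bump_gain p \<alpha>"
proof -
  have "p * \<alpha> \<le> p * (exp \<alpha> - 1)"
    using exp_ge_add_one_self[of \<alpha>] assms by (intro mult_left_mono) linarith+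
  moreover have "0 \<le> p * \<alpha>" using assms by simp
  ultimately show ?thesis
    unfolding bump_gain_def by (simp add: divide_simps) (simp add: algebra_simps)
qed

lemma exp_minus_one_minus_self_le_sq:
  fixes x :: real
  assumes "\<bar>x\<bar> \<le> 1"
  shows "exp x - 1 - x \<le> x\<^sup>2"
proof (cases "0 \<le> x")
  case True
  then show ?thesis using exp_bound[of x] assms by simp
next
  case False
  have "exp x * (1 - x) \<le> 1"
    using exp_ge_add_one_self[of "-x"] False by (simp add: exp_minus field_simps)
  also have "1 \<le> (1 + x + x\<^sup>2) * (1 - x)"
    using False by (simp add: algebra_simps power2_eq_square mult_nonpos_nonneg)
  finally have "exp x \<le> 1 + x + x\<^sup>2"
    using False by (simp add: mult_le_cancel_right)
  then show ?thesis by simp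
qed

lemma bump_gain_approx:
  fixes p c :: real
  assumes "0 < p" "p \<le> 1" "\<bar>c\<bar> \<le> 1"
  shows "\<bar>bump_gain p c - c\<bar> \<le> c\<^sup>2"
proof -
  define D where "D = 1 + p * (exp c - 1)"
  define u where "u = exp c - 1 - c"
  define v where "v = exp (- c) - 1 + c"
  have u: "0 \<le> u" "u \<le> c\<^sup>2"
    unfolding u_def using exp_ge_add_one_self[of c] exp_minus_one_minus_self_le_sq[OF assms(3)]
    by linarith+
  have v: "0 \<le> v" "v \<le> c\<^sup>2"
    unfolding v_def using exp_ge_add_one_self[of "- c"] exp_minus_one_minus_self_le_sq[of "- c"] assms(3)
    by simp_all
  have "0 < D" unfolding D_def using assms by (intro bump_gain_denom_pos)
  have D: "D = (1 - p) + p * exp c" unfolding D_def by (simp add: algebra_simps)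
  have "bump_gain p c - c = ((1 - p) * u - p * exp c * v) / D"
    using \<open>0 < D\<close> unfolding bump_gain_def D_def[symmetric] u_def v_def
    by (simp add: field_simps exp_minus) (simp add: D_def algebra_simps)
  moreover have "(1 - p) * u - p * exp c * v \<le> c\<^sup>2 * D"
  proof -
    have "(1 - p) * u \<le> (1 - p) * c\<^sup>2" using u assms by (intro mult_left_mono) auto
    moreover have "0 \<le> p * exp c * v" using v assms by simp
    moreover have "0 \<le> c\<^sup>2 * (p * exp c)" using assms by simp
    ultimately show ?thesis unfolding D by (simp add: algebra_simps)
  qed
  moreover have "- (c\<^sup>2 * D) \<le> (1 - p) * u - p * exp c * v"
  proof -
    have "0 \<le> (1 - p) * u" using u assms by simp
    moreover have "p * exp c * v \<le> p * exp c * c\<^sup>2" using v assms by (intro mult_left_mono) auto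
    moreover have "0 \<le> c\<^sup>2 * (1 - p)" using assms by simp
    ultimately show ?thesis unfolding D by (simp add: algebra_simps)
  qed
  ultimately show ?thesis
    using \<open>0 < D\<close> by (simp add: abs_le_iff divide_le_eq le_divide_eq)
qed

lemma exp_reward_pg_update_true_reward_nonneg:
  fixes \<theta> r :: "'a::finite \<Rightarrow> real"
  assumes "0 < \<eta>"
  shows "0 \<le> exp_reward (pg_update \<theta> \<eta> (is_reward \<theta> i r) (baseline \<theta> r i)) r - exp_reward \<theta> r"
proof -
  define p where "p = softmax \<theta> i"
  define \<alpha> where "\<alpha> = \<eta> * (r i - exp_reward \<theta> r) / p"
  have "0 < p" "p \<le> 1" unfolding p_def by (rule softmax_pos softmax_le_one)+
  have "p * bump_gain p \<alpha> * (r i - exp_reward \<theta> r) = p\<^sup>2 / \<eta> * (\<alpha> * bump_gain p \<alpha>)"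
    using assms \<open>0 < p\<close> by (simp add: \<alpha>_def field_simps power2_eq_square)
  also have "0 \<le> \<dots>"
    using assms bump_gain_mult_self_nonneg[OF \<open>0 < p\<close> \<open>p \<le> 1\<close>] by simp
  finally show ?thesis
    unfolding exp_reward_pg_update p_def \<alpha>_def by simp
qed

lemma expected_improvement_true_reward:
  fixes \<theta> r :: "'a::finite \<Rightarrow> real"
  assumes "0 < \<eta>" and r01: "\<forall>a. 0 \<le> r a \<and> r a \<le> 1" and astar: "\<forall>a. r a \<le> r astar"
  shows "\<eta> / (1 + \<eta>) * softmax \<theta> astar * (r astar - exp_reward \<theta> r)\<^sup>2
    \<le> (\<Sum>act\<in>UNIV. softmax \<theta> act *
          exp_reward (pg_update \<theta> \<eta> (is_reward \<theta> act r) (baseline \<theta> r act)) r) - exp_reward \<theta> r"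
proof -
  define J where "J = exp_reward \<theta> r"
  define gain where
    "gain act = exp_reward (pg_update \<theta> \<eta> (is_reward \<theta> act r) (baseline \<theta> r act)) r - J" for act
  define p where "p = softmax \<theta> astar"
  define d where "d = r astar - J"
  have "0 < p" "p \<le> 1" unfolding p_def by (rule softmax_pos softmax_le_one)+
  have "0 \<le> J" unfolding J_def using r01 by (intro exp_reward_ge) auto
  have "0 \<le> d" unfolding d_def J_def using astar by (simp add: exp_reward_le)
  have "r astar \<le> 1" using r01 by simp
  then have "\<eta> * d \<le> \<eta>" using \<open>0 < \<eta>\<close> \<open>0 \<le> J\<close> by (simp add: d_def mult_left_le)
  have "0 \<le> \<eta> * d" using \<open>0 < \<eta>\<close> \<open>0 \<le> d\<close> by simp
  have "\<eta> / (1 + \<eta>) * p * d\<^sup>2 = p * (\<eta> * d / (1 + \<eta>)) * d"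
    by (simp add: power2_eq_square)
  also have "\<dots> \<le> p * (\<eta> * d / (1 + \<eta> * d)) * d"
    using \<open>0 \<le> \<eta> * d\<close> \<open>\<eta> * d \<le> \<eta>\<close> \<open>0 < p\<close> \<open>0 \<le> d\<close>
    by (intro mult_right_mono mult_left_mono divide_left_mono) auto
  also have "\<dots> \<le> p * (p * bump_gain p (\<eta> * d / p)) * d"
    using bump_gain_ge[OF \<open>0 < p\<close> \<open>p \<le> 1\<close>, of "\<eta> * d / p"] \<open>0 \<le> \<eta> * d\<close> \<open>0 < p\<close> \<open>0 \<le> d\<close>
    by (intro mult_right_mono mult_left_mono) auto
  also have "\<dots> = p * gain astar"
    unfolding gain_def exp_reward_pg_update p_def d_def J_def by simp
  also have "\<dots> \<le> (\<Sum>act\<in>UNIV. softmax \<theta> act * gain act)"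
    unfolding p_def gain_def J_def
    using exp_reward_pg_update_true_reward_nonneg[OF \<open>0 < \<eta>\<close>] less_imp_le[OF softmax_pos]
    by (intro member_le_sum mult_nonneg_nonneg) auto
  finally show ?thesis
    unfolding gain_def sum_softmax_diff[symmetric] p_def d_def J_def .
qed

lemma mult_bump_gain_ge_linear:
  fixes p s \<delta> z :: real
  assumes "0 < p" "p \<le> 1" "0 < s" "\<bar>\<delta>\<bar> \<le> s" "\<bar>z\<bar> \<le> 2 * s"
  shows "\<delta> * \<bar>\<delta>\<bar> * z / (8 * s\<^sup>2) - \<bar>\<delta>\<bar> ^ 3 / (16 * s\<^sup>2)
    \<le> \<delta> * bump_gain p (\<bar>\<delta>\<bar> * z / (8 * s\<^sup>2))"
proof -
  define c where "c = \<bar>\<delta>\<bar> * z / (8 * s\<^sup>2)"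
  have "\<bar>\<delta>\<bar> * \<bar>z\<bar> \<le> s * (2 * s)" using assms by (intro mult_mono) auto
  then have "\<bar>c\<bar> \<le> 1 / 4"
    using assms unfolding c_def by (simp add: abs_mult field_simps power2_eq_square)
  then have "\<bar>\<delta> * (bump_gain p c - c)\<bar> \<le> \<bar>\<delta>\<bar> * c\<^sup>2"
    using bump_gain_approx[OF assms(1,2), of c] by (simp add: abs_mult mult_left_mono)
  moreover have "\<bar>\<delta>\<bar> * c\<^sup>2 \<le> \<bar>\<delta>\<bar> ^ 3 / (16 * s\<^sup>2)"
  proof -
    have "c\<^sup>2 = \<delta>\<^sup>2 * z\<^sup>2 / (8 * s\<^sup>2)\<^sup>2"
      unfolding c_def by (simp add: power_divide power_mult_distrib)
    also have "\<dots> \<le> \<delta>\<^sup>2 * (2 * s)\<^sup>2 / (8 * s\<^sup>2)\<^sup>2"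
      using assms power_mono[of "\<bar>z\<bar>" "2 * s" 2]
      by (intro divide_right_mono mult_left_mono) auto
    also have "\<dots> = \<delta>\<^sup>2 / (16 * s\<^sup>2)"
      using assms by (simp add: power2_eq_square field_simps)
    finally have "\<bar>\<delta>\<bar> * c\<^sup>2 \<le> \<bar>\<delta>\<bar> * (\<delta>\<^sup>2 / (16 * s\<^sup>2))"
      by (intro mult_left_mono) auto
    then show ?thesis by (simp add: power2_eq_square power3_eq_cube)
  qed
  moreover have "\<delta> * c = \<delta> * \<bar>\<delta>\<bar> * z / (8 * s\<^sup>2)" unfolding c_def by simp
  ultimately show ?thesis
    unfolding c_def[symmetric] by (simp add: abs_le_iff algebra_simps)
qed

lemma integrable_id_of_AE_abs_le:
  fixes M :: "real measure"
  assumes "finite_measure M" "sets M = sets borel" "AE y in M. \<bar>y\<bar> \<le> s"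
  shows "integrable M (\<lambda>y. y)"
proof (rule finite_measure.integrable_const_bound[OF assms(1), where B = s])
  show "(\<lambda>y. y) \<in> borel_measurable M"
    unfolding measurable_cong_sets[OF assms(2) refl] by simp
qed (use assms(3) in simp)

lemma expected_exp_reward_pg_update_sampled_reward_ge:
  fixes \<theta> r :: "'a::finite \<Rightarrow> real" and M :: "real measure"
  assumes "prob_space M" "sets M = sets borel" and supp: "AE y in M. \<bar>y\<bar> \<le> s"
    and mean: "(\<integral>y. y \<partial>M) = r i" and "0 < s" and r_bounds: "\<forall>a. 0 \<le> r a \<and> r a \<le> s"
  defines "J \<equiv> exp_reward \<theta> r"
  shows "J + softmax \<theta> i * \<bar>r i - J\<bar> ^ 3 / (16 * s\<^sup>2)
    \<le> (\<integral>y. exp_reward (pg_update \<theta> (softmax \<theta> i * \<bar>r i - J\<bar> / (8 * s\<^sup>2))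
                  (is_reward \<theta> i (sampled_vec i y)) (baseline \<theta> r i)) r \<partial>M)"
    (is "_ \<le> (\<integral>y. ?new y \<partial>M)")
proof -
  interpret prob_space M by fact
  define p where "p = softmax \<theta> i"
  define \<delta> where "\<delta> = r i - J"
  define lower where
    "lower y = J + p * (\<delta> * \<bar>\<delta>\<bar> * (y - J) / (8 * s\<^sup>2) - \<bar>\<delta>\<bar> ^ 3 / (16 * s\<^sup>2))" for y
  have "0 < p" "p \<le> 1" unfolding p_def by (rule softmax_pos softmax_le_one)+
  have J: "0 \<le> J" "J \<le> s" unfolding J_def using r_bounds by (auto intro: exp_reward_ge exp_reward_le)
  have "\<bar>\<delta>\<bar> \<le> s" unfolding \<delta>_def using J r_bounds[rule_format, of i] by (simp add: abs_le_iff)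
  have new_eq: "?new y = J + p * (\<delta> * bump_gain p (\<bar>\<delta>\<bar> * (y - J) / (8 * s\<^sup>2)))" for y
  proof -
    have "p * \<bar>\<delta>\<bar> / (8 * s\<^sup>2) * (sampled_vec i y i - J) / p = \<bar>\<delta>\<bar> * (y - J) / (8 * s\<^sup>2)"
      using \<open>0 < p\<close> by (simp add: sampled_vec_def)
    with exp_reward_pg_update[of \<theta> "p * \<bar>\<delta>\<bar> / (8 * s\<^sup>2)" i "sampled_vec i y" r, folded J_def p_def \<delta>_def]
    show ?thesis unfolding p_def[symmetric] \<delta>_def[symmetric] by (simp add: algebra_simps)
  qed
  have "AE y in M. lower y \<le> ?new y"
    using supp
  proof eventually_elim
    case (elim y)
    then have "\<bar>y - J\<bar> \<le> 2 * s" using J by (auto simp: abs_le_iff)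
    then show ?case
      unfolding lower_def new_eq
      using mult_bump_gain_ge_linear[OF \<open>0 < p\<close> \<open>p \<le> 1\<close> \<open>0 < s\<close> \<open>\<bar>\<delta>\<bar> \<le> s\<close>] \<open>0 < p\<close>
      by (intro add_left_mono mult_left_mono) auto
  qed
  moreover have "integrable M lower"
    using integrable_id_of_AE_abs_le[OF finite_measure_axioms assms(2) supp] unfolding lower_def by simp
  moreover have "integrable M ?new"
  proof (rule integrable_const_bound[where B = s])
    have "0 \<le> ?new y" "?new y \<le> s" for y
      using r_bounds by (auto intro: exp_reward_le exp_reward_ge)
    then show "AE y in M. norm (?new y) \<le> s" by simp
    show "?new \<in> borel_measurable M"
      unfolding new_eq bump_gain_def measurable_cong_sets[OF assms(2) refl] by simp
  qed
  ultimately have "(\<integral>y. lower y \<partial>M) \<le> (\<integral>y. ?new y \<partial>M)"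
    by (intro integral_mono_AE)
  moreover have "(\<integral>y. lower y \<partial>M) = J + p * \<bar>\<delta>\<bar> ^ 3 / (16 * s\<^sup>2)"
  proof -
    have "(\<integral>y. lower y \<partial>M) = J + p * (\<delta> * \<bar>\<delta>\<bar> * (r i - J) / (8 * s\<^sup>2) - \<bar>\<delta>\<bar> ^ 3 / (16 * s\<^sup>2))"
      using integrable_id_of_AE_abs_le[OF finite_measure_axioms assms(2) supp] mean
      unfolding lower_def by (simp add: prob_space)
    also have "\<delta> * \<bar>\<delta>\<bar> * (r i - J) = \<bar>\<delta>\<bar> ^ 3"
      unfolding \<delta>_def[symmetric] by (simp add: power3_eq_cube)
    finally show ?thesis by (simp add: field_simps power2_eq_square)
  qed
  ultimately show ?thesis unfolding p_def \<delta>_def by simp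
qed

lemma expected_improvement_sampled_reward:
  fixes \<theta> r :: "'a::finite \<Rightarrow> real" and R :: "'a \<Rightarrow> real measure"
  assumes R_prob: "\<forall>a. prob_space (R a)" and R_borel: "\<forall>a. sets (R a) = sets borel"
    and R_supp: "\<forall>a. AE x in R a. \<bar>x\<bar> \<le> s" and R_mean: "\<forall>a. (\<integral>x. x \<partial>R a) = r a"
    and "0 < s" and r_nonneg: "\<forall>a. 0 \<le> r a"
  defines "J \<equiv> exp_reward \<theta> r"
  shows "1 / (16 * s\<^sup>2) * (\<Sum>i\<in>UNIV. softmax \<theta> i ^ 2 * \<bar>r i - J\<bar> ^ 3)
    \<le> (\<Sum>act\<in>UNIV. softmax \<theta> act *
          (\<integral>x. exp_reward (pg_update \<theta> (softmax \<theta> act * \<bar>r act - J\<bar> / (8 * s\<^sup>2))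
                (is_reward \<theta> act (sampled_vec act x)) (baseline \<theta> r act)) r \<partial>R act)) - J"
proof -
  have r_le: "r a \<le> s" for a
  proof -
    interpret prob_space "R a" using R_prob by simp
    have supp: "AE x in R a. \<bar>x\<bar> \<le> s" using R_supp by simp
    have "(\<integral>x. x \<partial>R a) \<le> s"
    proof (rule integral_le_const)
      show "integrable (R a) (\<lambda>x. x)"
        using integrable_id_of_AE_abs_le[OF finite_measure_axioms _ supp] R_borel by simp
      show "AE x in R a. x \<le> s" using supp by eventually_elim simp
    qed
    then show ?thesis using R_mean by simp
  qed
  have "1 / (16 * s\<^sup>2) * (\<Sum>i\<in>UNIV. softmax \<theta> i ^ 2 * \<bar>r i - J\<bar> ^ 3)
      = (\<Sum>act\<in>UNIV. softmax \<theta> act * (softmax \<theta> act * \<bar>r act - J\<bar> ^ 3 / (16 * s\<^sup>2)))"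
    by (simp add: sum_distrib_left power2_eq_square mult.assoc)
  also have "\<dots> \<le> (\<Sum>act\<in>UNIV. softmax \<theta> act *
          ((\<integral>x. exp_reward (pg_update \<theta> (softmax \<theta> act * \<bar>r act - J\<bar> / (8 * s\<^sup>2))
                (is_reward \<theta> act (sampled_vec act x)) (baseline \<theta> r act)) r \<partial>R act) - J))"
  proof (intro sum_mono mult_left_mono)
    fix act
    show "softmax \<theta> act * \<bar>r act - J\<bar> ^ 3 / (16 * s\<^sup>2)
      \<le> (\<integral>x. exp_reward (pg_update \<theta> (softmax \<theta> act * \<bar>r act - J\<bar> / (8 * s\<^sup>2))
                (is_reward \<theta> act (sampled_vec act x)) (baseline \<theta> r act)) r \<partial>R act) - J"
      using expected_exp_reward_pg_update_sampled_reward_ge[of "R act" s r act \<theta>]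
        R_prob R_borel R_supp R_mean \<open>0 < s\<close> r_nonneg r_le
      unfolding J_def by simp
  qed (rule less_imp_le[OF softmax_pos])
  finally show ?thesis unfolding sum_softmax_diff .
qed

lemma sq_le_card_mult_sum_sq_of_sum_eq_zero:
  fixes f :: "'a::finite \<Rightarrow> real"
  assumes "(\<Sum>a\<in>UNIV. f a) = 0"
  shows "(f a0)\<^sup>2 \<le> (real CARD('a) - 1) * (\<Sum>a\<in>UNIV - {a0}. (f a)\<^sup>2)"
proof -
  have "f a0 = - (\<Sum>a\<in>UNIV - {a0}. f a)"
    using assms sum.remove[of UNIV a0 f] by simp
  then have "(f a0)\<^sup>2 = (\<Sum>a\<in>UNIV - {a0}. f a)\<^sup>2" by simp
  also have "\<dots> \<le> (\<Sum>a\<in>UNIV - {a0}. (f a)\<^sup>2) * card (UNIV - {a0})"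
    by (rule sum_squared_le_sum_of_squares)
  also have "card (UNIV - {a0}) = CARD('a) - 1"
    by (simp add: card_Diff_singleton)
  finally show ?thesis
    by (simp add: Suc_leI mult.commute)
qed

lemma weighted_abs_cube_sum_ge:
  fixes p r :: "'a::finite \<Rightarrow> real"
  assumes "2 \<le> CARD('a)" and centered: "(\<Sum>a\<in>UNIV. p a * (r a - J)) = 0"
    and "J \<le> r astar"
  shows "(r astar - Max (r ` (UNIV - {astar}))) / (real CARD('a) - 1) * p astar ^ 2 * (r astar - J)\<^sup>2
    \<le> (\<Sum>i\<in>UNIV. p i ^ 2 * \<bar>r i - J\<bar> ^ 3)"
proof -
  define A where "A = UNIV - {astar}"
  define k where "k = real CARD('a) - 1"
  define d where "d = r astar - J"
  define \<Delta> where "\<Delta> = r astar - Max (r ` A)"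
  define m where "m = max 0 (\<Delta> - d)"
  define Q where "Q = (p astar * d)\<^sup>2"
  have "1 \<le> k" unfolding k_def using assms(1) by simp
  have "0 \<le> d" unfolding d_def using \<open>J \<le> r astar\<close> by simp
  have "d \<le> d * k" using \<open>1 \<le> k\<close> \<open>0 \<le> d\<close> by (simp add: mult_le_cancel_left1)
  have m_le: "m \<le> \<bar>r i - J\<bar>" if "i \<in> A" for i
  proof -
    have "r i \<le> Max (r ` A)" using that by simp
    then show ?thesis unfolding m_def \<Delta>_def d_def by simp
  qed
  have "Q \<le> k * (\<Sum>i\<in>A. (p i * \<bar>r i - J\<bar>)\<^sup>2)"
    using sq_le_card_mult_sum_sq_of_sum_eq_zero[OF centered, of astar]
    unfolding Q_def k_def A_def d_def by (simp add: power_mult_distrib)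
  then have "Q / k \<le> (\<Sum>i\<in>A. (p i * \<bar>r i - J\<bar>)\<^sup>2)"
    using \<open>1 \<le> k\<close> by (simp add: divide_le_eq mult.commute)
  then have "m * Q / k \<le> m * (\<Sum>i\<in>A. (p i * \<bar>r i - J\<bar>)\<^sup>2)"
    unfolding times_divide_eq_right[symmetric] by (rule mult_left_mono) (simp add: m_def)
  also have "\<dots> \<le> (\<Sum>i\<in>A. p i ^ 2 * \<bar>r i - J\<bar> ^ 3)"
    unfolding sum_distrib_left
  proof (rule sum_mono)
    fix i assume "i \<in> A"
    have "m * (p i * \<bar>r i - J\<bar>)\<^sup>2 \<le> \<bar>r i - J\<bar> * (p i * \<bar>r i - J\<bar>)\<^sup>2"
      using m_le[OF \<open>i \<in> A\<close>] by (rule mult_right_mono) simp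
    then show "m * (p i * \<bar>r i - J\<bar>)\<^sup>2 \<le> p i ^ 2 * \<bar>r i - J\<bar> ^ 3"
      by (simp add: power_mult_distrib power2_eq_square power3_eq_cube mult_ac)
  qed
  finally have rest: "m * Q / k \<le> (\<Sum>i\<in>A. p i ^ 2 * \<bar>r i - J\<bar> ^ 3)" .
  have "\<Delta> / k \<le> d + m / k"
  proof (cases "\<Delta> \<le> d")
    case True
    then show ?thesis
      using \<open>d \<le> d * k\<close> \<open>1 \<le> k\<close> by (simp add: m_def divide_le_eq)
  next
    case False
    then show ?thesis
      using \<open>d \<le> d * k\<close> \<open>1 \<le> k\<close> by (simp add: m_def field_simps)
  qed
  then have "\<Delta> / k * Q \<le> (d + m / k) * Q"
    unfolding Q_def by (intro mult_right_mono) auto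
  also have "\<dots> = p astar ^ 2 * \<bar>r astar - J\<bar> ^ 3 + m * Q / k"
    using \<open>0 \<le> d\<close> unfolding Q_def d_def[symmetric]
    by (simp add: algebra_simps power2_eq_square power3_eq_cube)
  also have "\<dots> \<le> (\<Sum>i\<in>UNIV. p i ^ 2 * \<bar>r i - J\<bar> ^ 3)"
    using rest sum.remove[of UNIV astar "\<lambda>i. p i ^ 2 * \<bar>r i - J\<bar> ^ 3"] unfolding A_def by simp
  finally show ?thesis
    unfolding Q_def \<Delta>_def k_def d_def A_def by (simp add: power_mult_distrib mult_ac)
qed

theorem lemma1:
  fixes r :: "'a::finite \<Rightarrow> real"
    and \<theta> :: "'a \<Rightarrow> real"
    and astar :: 'a
    and \<eta> :: real
    and Rmax :: real
    and R :: "'a \<Rightarrow> real measure"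
  assumes K2: "CARD('a) \<ge> 2"
    and r01: "\<forall>a. 0 \<le> r a \<and> r a \<le> 1"
    and astar: "\<forall>a. r a \<le> r astar"
    and eta_pos: "\<eta> > 0"
    and Rmax_pos: "Rmax > 0"
    and R_prob: "\<forall>a. prob_space (R a)"
    and R_borel: "\<forall>a. sets (R a) = sets borel"
    and R_supp: "\<forall>a. AE x in R a. \<bar>x\<bar> \<le> Rmax"
    and R_mean: "\<forall>a. (\<integral>x. x \<partial>R a) = r a"
  shows
    "(\<forall>act. exp_reward (pg_update \<theta> \<eta> (is_reward \<theta> act r) (baseline \<theta> r act)) r
              - exp_reward \<theta> r \<ge> 0)
   \<and> (\<Sum>act\<in>UNIV. softmax \<theta> act *
          exp_reward (pg_update \<theta> \<eta> (is_reward \<theta> act r) (baseline \<theta> r act)) r)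
       - exp_reward \<theta> r
     \<ge> \<eta> / (1 + \<eta>) * softmax \<theta> astar * (r astar - exp_reward \<theta> r)\<^sup>2
   \<and> (let J = exp_reward \<theta> r;
         \<eta>t = (\<lambda>act. softmax \<theta> act * \<bar>r act - J\<bar> / (8 * Rmax\<^sup>2));
         \<Delta> = r astar - Max (r ` (UNIV - {astar}));
         EJ = (\<Sum>act\<in>UNIV. softmax \<theta> act *
                 (\<integral>x. exp_reward (pg_update \<theta> (\<eta>t act) (is_reward \<theta> act (sampled_vec act x))
                                   (baseline \<theta> r act)) r \<partial>R act))
     in EJ - J \<ge> 1 / (16 * Rmax\<^sup>2) * (\<Sum>i\<in>UNIV. softmax \<theta> i ^ 2 * \<bar>r i - J\<bar> ^ 3)
      \<and> 1 / (16 * Rmax\<^sup>2) * (\<Sum>i\<in>UNIV. softmax \<theta> i ^ 2 * \<bar>r i - J\<bar> ^ 3)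
          \<ge> 1 / (16 * Rmax\<^sup>2) * (\<Delta> / (real CARD('a) - 1))
             * softmax \<theta> astar ^ 2 * (r astar - J)\<^sup>2)"
proof -
  have r_nonneg: "\<forall>a. 0 \<le> r a" using r01 by simp
  have centered: "(\<Sum>a\<in>UNIV. softmax \<theta> a * (r a - exp_reward \<theta> r)) = 0"
    by (simp add: sum_softmax_diff[symmetric] exp_reward_def)
  have "exp_reward \<theta> r \<le> r astar" using astar by (simp add: exp_reward_le)
  note lower_bound = weighted_abs_cube_sum_ge[OF K2 centered this]
  show ?thesis
    unfolding Let_def
    using exp_reward_pg_update_true_reward_nonneg[OF eta_pos]
      expected_improvement_true_reward[OF eta_pos r01 astar]
      expected_improvement_sampled_reward[OF R_prob R_borel R_supp R_mean Rmax_pos r_nonneg]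
      mult_left_mono[OF lower_bound, of "1 / (16 * Rmax\<^sup>2)"]
    by (simp add: mult.assoc) blast
qed

end
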